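(* Let $M>1$ and let $Q$ be an indefinite ternary quadratic form of Diophantine type $M$ with $\det Q=1$. Then there exists $0<\eta<1$ such that for every $R>10$ the set $\{v\in\Delta_Q\cap\mathcal{H}_{\eta,M}: R\le\|v\|<R^2\}$ is contained in the union of at most $12$ lines through the origin.
   Context: $\|\cdot\|$ is the supremum norm on $\mathbb{R}^3$; for quadratic forms $\|Q\|$ is the maximal absolute value of coefficients. $Q_0(v)=v_2^2-2v_1v_3$. Fix $g\in\mathrm{SL}_3(\mathbb{R})$ with $Q(v)=Q_0(gv)$ for all $v$ and set $\Delta_Q=g\mathbb{Z}^3$. $Q$ is of Diophantine type $M$ if there is $c>0$ with $\|Q-\rho Q'\|>c\|Q'\|^{-M}$ for every nonzero integral ternary quadratic form $Q'$, $\rho=(\det Q')^{-1/3}$. $\mathcal{H}_{\eta,M}=\{v\in\mathbb{R}^3:|Q_0(v)|<\eta\|v\|^{-50M}\}$. *)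

theory Defs
  imports "HOL-Analysis.Analysis"
begin

text \<open>Vectors of R^3 are real^3 with coordinates v$1, v$2, v$3.
 A ternary quadratic form is represented by its symmetric real 3x3 matrix A,
 with value v \<bullet> (A *v v).\<close>

definition supn :: "real^3 \<Rightarrow> real" where
  "supn v = Max (range (\<lambda>i. \<bar>v $ i\<bar>))"

definition qf :: "real^3^3 \<Rightarrow> real^3 \<Rightarrow> real" where
  "qf A v = v \<bullet> (A *v v)"

definition symmetric_form :: "real^3^3 \<Rightarrow> bool" where
  "symmetric_form A \<longleftrightarrow> transpose A = A"

text \<open>Coefficients of the polynomial sum_i A_ii v_i^2 + sum_{i<j} 2 A_ij v_i v_j.\<close>
definition qcoeffs :: "real^3^3 \<Rightarrow> real set" where
  "qcoeffs A = {A $ i $ i | i. True} \<union> {2 * A $ i $ j | i j. i \<noteq> j}"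

definition qnorm :: "real^3^3 \<Rightarrow> real" where
  "qnorm A = Max (abs ` qcoeffs A)"

definition integral_form :: "real^3^3 \<Rightarrow> bool" where
  "integral_form A \<longleftrightarrow> symmetric_form A \<and> qcoeffs A \<subseteq> \<int>"

text \<open>Determinant of a form, normalised so that Q0 has determinant 1.\<close>
definition qdet :: "real^3^3 \<Rightarrow> real" where
  "qdet A = - det A"

definition Q0 :: "real^3 \<Rightarrow> real" where
  "Q0 v = (v $ 2)^2 - 2 * (v $ 1) * (v $ 3)"

definition indefinite :: "real^3^3 \<Rightarrow> bool" where
  "indefinite A \<longleftrightarrow> (\<exists>v w. qf A v > 0 \<and> qf A w < 0)"

definition diophantine_type :: "real^3^3 \<Rightarrow> real \<Rightarrow> bool" where
  "diophantine_type Q M \<longleftrightarrow> (\<exists>c>0. \<forall>Q'. integral_form Q' \<and> Q' \<noteq> 0 \<and> qdet Q' \<noteq> 0 \<longrightarrow>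
      qnorm (Q - root 3 (inverse (qdet Q')) *\<^sub>R Q') > c * qnorm Q' powr (- M))"

definition lattice_of :: "real^3^3 \<Rightarrow> (real^3) set" where
  "lattice_of g = {g *v z | z. \<forall>i. z $ i \<in> \<int>}"

definition H_set :: "real \<Rightarrow> real \<Rightarrow> (real^3) set" where
  "H_set \<eta> M = {v. \<bar>Q0 v\<bar> < \<eta> * supn v powr (- 50 * M)}"

definition line_through_origin :: "real^3 \<Rightarrow> (real^3) set" where
  "line_through_origin d = {t *\<^sub>R d | t. True}"

end

(*
  Pull the lattice points back by g: they become integral vectors z with |z| <= K R^2 and
  |Q z| <= eps = eta R^(-50 M). Two such vectors on different lines are independent.

  Three pairwise independent ones are never coplanar: N z3 = A z1 + B z2 with nonzero integers
  A, B forces the mixed value z1 . Q z2 to be small, so the Gram matrix of z1, z2, z1 x z2 has a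
  small upper-left block, whereas its determinant is -N^2 with N a nonzero integer.

  Hence five pairwise independent ones are in general position. The conic through them is an
  integral form P of height O(|z|^10). Interpolating the small values Q z_i by a form W of
  size O(|z|^4 eps) shows that Q - W vanishes at the five points, so it is a multiple of P; the
  normalized multiple of P then approximates Q within O(|z|^4 eps), which for small eta is too
  good for Diophantine type M. So at most four lines are needed.
*)
theory Submission
  imports Defs
begin

unbundle cross3_syntax

section \<open>Quadratic forms\<close>

lemma symmetric_form_iff: "symmetric_form A \<longleftrightarrow> (\<forall>i j. A$i$j = A$j$i)"
  by (auto simp: symmetric_form_def transpose_def vec_eq_iff)

lemma inner_matrix_commute:
  assumes "symmetric_form A" shows "x \<bullet> (A *v y) = y \<bullet> (A *v x)"
proof -
  have "x \<bullet> (A *v y) = (x v* A) \<bullet> y"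
    by (simp add: dot_lmul_matrix)
  also have "x v* A = A *v x"
    using assms transpose_matrix_vector[of A x] by (simp add: symmetric_form_def)
  finally show ?thesis
    by (simp add: inner_commute)
qed

lemma qf_add:
  "symmetric_form A \<Longrightarrow> qf A (x + y) = qf A x + 2 * (x \<bullet> (A *v y)) + qf A y"
  by (simp add: qf_def matrix_vector_right_distrib inner_add_left inner_add_right
      inner_matrix_commute[of A y x])

lemma qf_scaleR: "qf A (c *\<^sub>R x) = c\<^sup>2 * qf A x"
  by (simp add: qf_def matrix_vector_mult_scaleR power2_eq_square)

lemma qf_lincomb2:
  assumes "symmetric_form A"
  shows "qf A (a *\<^sub>R x + b *\<^sub>R y) = a\<^sup>2 * qf A x + 2 * a * b * (x \<bullet> (A *v y)) + b\<^sup>2 * qf A y"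
  by (simp add: qf_add[OF assms] qf_scaleR matrix_vector_mult_scaleR)

lemma qf_lincomb3:
  assumes "symmetric_form A"
  shows "qf A (a *\<^sub>R x + b *\<^sub>R y + c *\<^sub>R z) = a\<^sup>2 * qf A x + b\<^sup>2 * qf A y + c\<^sup>2 * qf A z
    + 2 * a * b * (x \<bullet> (A *v y)) + 2 * a * c * (x \<bullet> (A *v z)) + 2 * b * c * (y \<bullet> (A *v z))"
  by (simp add: qf_add[OF assms] qf_scaleR matrix_vector_mult_scaleR matrix_vector_right_distrib
      inner_add_left algebra_simps)

lemma qf_matrix_add: "qf (A + B) x = qf A x + qf B x"
  and qf_matrix_diff: "qf (A - B) x = qf A x - qf B x"
  and qf_matrix_scaleR: "qf (c *\<^sub>R A) x = c * qf A x"
  by (simp_all add: qf_def matrix_vector_mult_add_rdistrib matrix_vector_mult_diff_rdistrib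
      inner_add_right inner_diff_right scaleR_matrix_vector_assoc[symmetric])

lemma qf_matrix_sum: "finite K \<Longrightarrow> qf (\<Sum>k\<in>K. A k) x = (\<Sum>k\<in>K. qf (A k) x)"
  by (induction K rule: finite_induct) (simp add: qf_def, simp add: qf_matrix_add)

lemma symmetric_form_add: "symmetric_form A \<Longrightarrow> symmetric_form B \<Longrightarrow> symmetric_form (A + B)"
  and symmetric_form_diff: "symmetric_form A \<Longrightarrow> symmetric_form B \<Longrightarrow> symmetric_form (A - B)"
  and symmetric_form_scaleR: "symmetric_form A \<Longrightarrow> symmetric_form (c *\<^sub>R A)"
  by (simp_all add: symmetric_form_iff)

lemma symmetric_form_sum:
  "finite K \<Longrightarrow> (\<And>k. k \<in> K \<Longrightarrow> symmetric_form (A k)) \<Longrightarrow> symmetric_form (\<Sum>k\<in>K. A k)"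
  by (induction K rule: finite_induct) (simp_all add: symmetric_form_add, simp add: symmetric_form_iff)

lemma qf_expand: "qf A x = (\<Sum>i\<in>UNIV. \<Sum>j\<in>UNIV. x$i * A$i$j * x$j)"
  by (simp add: qf_def inner_vec_def matrix_vector_mult_def sum_distrib_left mult.assoc)

lemma symmetric_form_eq_0_if_qf_eq_0:
  assumes "symmetric_form H" "\<And>x. qf H x = 0" shows "H = 0"
proof -
  have s: "H$2$1 = H$1$2" "H$3$1 = H$1$3" "H$3$2 = H$2$3"
    using assms(1) by (auto simp: symmetric_form_iff)
  have q: "qf H (vector [a, b, c]) = 0" for a b c
    using assms(2) .
  have d: "H$1$1 = 0" "H$2$2 = 0" "H$3$3 = 0"
    using q[of 1 0 0] q[of 0 1 0] q[of 0 0 1] by (simp_all add: qf_expand sum_3)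
  have "H$1$2 = 0" "H$1$3 = 0" "H$2$3 = 0"
    using q[of 1 1 0] q[of 1 0 1] q[of 0 1 1] d s by (simp_all add: qf_expand sum_3)
  with d s show ?thesis
    by (simp add: vec_eq_iff forall_3)
qed

definition sym_outer :: "real^3 \<Rightarrow> real^3 \<Rightarrow> real^3^3" where
  "sym_outer a b = (\<chi> i j. (a$i * b$j + b$i * a$j) / 2)"

lemma qf_sym_outer: "qf (sym_outer a b) x = (a \<bullet> x) * (b \<bullet> x)"
  by (simp add: qf_expand sym_outer_def inner_vec_def sum_3 algebra_simps)

lemma symmetric_form_sym_outer: "symmetric_form (sym_outer a b)"
  by (simp add: symmetric_form_iff sym_outer_def algebra_simps)

lemma integral_form_iff:
  "integral_form A \<longleftrightarrow> symmetric_form A \<and> (\<forall>i. A$i$i \<in> \<int>) \<and> (\<forall>i j. i \<noteq> j \<longrightarrow> 2 * A$i$j \<in> \<int>)"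
  by (auto simp: integral_form_def qcoeffs_def)

lemma integral_form_diff: "integral_form A \<Longrightarrow> integral_form B \<Longrightarrow> integral_form (A - B)"
  and integral_form_scaleR: "k \<in> \<int> \<Longrightarrow> integral_form A \<Longrightarrow> integral_form (k *\<^sub>R A)"
  by (auto simp: integral_form_iff symmetric_form_diff symmetric_form_scaleR right_diff_distrib
      mult.left_commute[of 2 k])

section \<open>Triple products, integral vectors and size estimates\<close>

lemma cross3_triple_repeat: "(x \<times> y) \<bullet> x = 0" "(x \<times> y) \<bullet> y = 0"
  by (simp_all add: cross3_simps)

lemma cross3_triple_cramer:
  "((z1 \<times> z2) \<bullet> z3) *\<^sub>R x
     = ((x \<times> z2) \<bullet> z3) *\<^sub>R z1 + ((z1 \<times> x) \<bullet> z3) *\<^sub>R z2 + ((z1 \<times> z2) \<bullet> x) *\<^sub>R z3"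
  by (simp add: cross3_simps forall_3)

lemma cross3_triple_pluecker:
  "((z4 \<times> z2) \<bullet> z3) * ((z1 \<times> z5) \<bullet> z3) - ((z5 \<times> z2) \<bullet> z3) * ((z1 \<times> z4) \<bullet> z3)
     = ((z1 \<times> z2) \<bullet> z3) * ((z4 \<times> z5) \<bullet> z3)"
  by (simp add: cross3_simps)

definition integral_vec :: "real^3 \<Rightarrow> bool" where
  "integral_vec z \<longleftrightarrow> (\<forall>i. z$i \<in> \<int>)"

lemma integral_vec_cross3: "integral_vec x \<Longrightarrow> integral_vec y \<Longrightarrow> integral_vec (x \<times> y)"
  by (auto simp: integral_vec_def cross_components forall_3)

lemma Ints_inner: "integral_vec x \<Longrightarrow> integral_vec y \<Longrightarrow> x \<bullet> y \<in> \<int>"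
  by (auto simp: integral_vec_def inner_vec_def sum_3)

lemma integral_form_sym_outer:
  assumes "integral_vec a" "integral_vec b" shows "integral_form (sym_outer a b)"
proof -
  have "2 * sym_outer a b $ i $ j = a$i * b$j + b$i * a$j" for i j
    by (simp add: sym_outer_def)
  then show ?thesis
    using assms by (auto simp: integral_form_iff symmetric_form_sym_outer integral_vec_def)
      (auto simp: sym_outer_def)
qed

lemma abs_le_supn: "\<bar>v$i\<bar> \<le> supn v"
  unfolding supn_def by (rule Max_ge) auto

lemma supn_le_iff: "supn v \<le> X \<longleftrightarrow> (\<forall>i. \<bar>v$i\<bar> \<le> X)"
  unfolding supn_def by (subst Max_le_iff) auto

lemma supn_nonneg: "0 \<le> supn v"
  using abs_le_supn[of v 1] by linarith

lemma abs_mult_le: "\<bar>a\<bar> \<le> p \<Longrightarrow> \<bar>b\<bar> \<le> q \<Longrightarrow> \<bar>(a::real) * b\<bar> \<le> p * q"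
  by (simp add: abs_mult mult_mono')

lemma abs_mult3_le: "\<bar>a\<bar> \<le> p \<Longrightarrow> \<bar>b\<bar> \<le> q \<Longrightarrow> \<bar>c\<bar> \<le> r \<Longrightarrow> \<bar>(a::real) * b * c\<bar> \<le> p * q * r"
  by (simp add: abs_mult mult_mono' order_trans[OF abs_ge_zero])

lemma supn_cross3_le:
  assumes "supn x \<le> X" "supn y \<le> Y" shows "supn (x \<times> y) \<le> 2 * X * Y"
proof -
  have b: "\<bar>x$i * y$j\<bar> \<le> X * Y" for i j
    using assms by (intro abs_mult_le) (auto simp: supn_le_iff)
  have "\<bar>x$i * y$j - y$i * x$j\<bar> \<le> 2 * X * Y" for i j
    using abs_triangle_ineq4[of "x$i * y$j" "x$j * y$i"] b[of i j] b[of j i]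
    by (simp add: mult.commute[of "y$i"])
  then show ?thesis
    unfolding supn_le_iff forall_3 cross_components by blast
qed

lemma abs_inner_le:
  assumes "supn x \<le> X" "supn y \<le> Y" shows "\<bar>x \<bullet> y\<bar> \<le> 3 * X * Y"
proof -
  have "\<bar>x$i * y$i\<bar> \<le> X * Y" for i
    using assms by (intro abs_mult_le) (auto simp: supn_le_iff)
  from this[of 1] this[of 2] this[of 3] show ?thesis
    by (simp add: inner_vec_def sum_3)
qed

lemma abs_cross3_triple_le:
  assumes "supn x \<le> Z" "supn y \<le> Z" "supn z \<le> Z" shows "\<bar>(x \<times> y) \<bullet> z\<bar> \<le> 6 * Z^3"
  using abs_inner_le[OF supn_cross3_le[OF assms(1,2)] assms(3)] by (simp add: power3_eq_cube)

lemma abs_inner_matrix_le: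
  assumes "\<forall>i j. \<bar>A$i$j\<bar> \<le> a" "supn x \<le> X" "supn y \<le> Y"
  shows "\<bar>x \<bullet> (A *v y)\<bar> \<le> 9 * X * a * Y"
proof -
  have "\<bar>x \<bullet> (A *v y)\<bar> = \<bar>\<Sum>i\<in>UNIV. \<Sum>j\<in>UNIV. x$i * A$i$j * y$j\<bar>"
    by (simp add: inner_vec_def matrix_vector_mult_def sum_distrib_left mult.assoc)
  also have "\<dots> \<le> (\<Sum>i\<in>(UNIV::3 set). \<Sum>j\<in>(UNIV::3 set). \<bar>x$i * A$i$j * y$j\<bar>)"
    by (rule order_trans[OF sum_abs sum_mono[OF sum_abs]])
  also have "\<dots> \<le> (\<Sum>i\<in>(UNIV::3 set). \<Sum>j\<in>(UNIV::3 set). X * a * Y)"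
    using assms by (intro sum_mono abs_mult3_le) (auto simp: supn_le_iff)
  finally show ?thesis
    by simp
qed

lemma abs_sym_outer_le:
  assumes "supn a \<le> X" "supn b \<le> Y" shows "\<bar>sym_outer a b $ i $ j\<bar> \<le> X * Y"
proof -
  have "\<bar>a$i * b$j\<bar> \<le> X * Y" "\<bar>b$i * a$j\<bar> \<le> Y * X"
    using assms by (auto simp: supn_le_iff intro!: abs_mult_le)
  then show ?thesis
    using abs_triangle_ineq[of "a$i * b$j" "b$i * a$j"] by (simp add: sym_outer_def mult.commute)
qed

lemma abs_divide_Ints_le:
  fixes d y :: "'a::linordered_field"
  shows "d \<in> \<int> \<Longrightarrow> d \<noteq> 0 \<Longrightarrow> \<bar>y / d\<bar> \<le> \<bar>y\<bar>"
  using divide_left_mono[of 1 "\<bar>d\<bar>" "\<bar>y\<bar>"] Ints_nonzero_abs_ge1[of d] by (simp add: abs_divide)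

lemma supn_matrix_vector_le:
  "supn (A *v v) \<le> (\<Sum>i\<in>UNIV. \<Sum>j\<in>UNIV. \<bar>A$i$j\<bar>) * supn v"
  unfolding supn_le_iff
proof
  fix i
  have "\<bar>(A *v v)$i\<bar> \<le> (\<Sum>j\<in>UNIV. \<bar>A$i$j\<bar> * supn v)"
    unfolding matrix_vector_mult_def vec_lambda_beta
    by (rule order_trans[OF sum_abs sum_mono]) (simp add: abs_mult mult_left_mono abs_le_supn)
  also have "\<dots> \<le> (\<Sum>i\<in>UNIV. \<Sum>j\<in>UNIV. \<bar>A$i$j\<bar>) * supn v"
    unfolding sum_distrib_right[symmetric]
    by (intro mult_right_mono supn_nonneg member_le_sum[of i UNIV "\<lambda>i. \<Sum>j\<in>UNIV. \<bar>A$i$j\<bar>"])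
      (auto intro: sum_nonneg)
  finally show "\<bar>(A *v v)$i\<bar> \<le> (\<Sum>i\<in>UNIV. \<Sum>j\<in>UNIV. \<bar>A$i$j\<bar>) * supn v" .
qed

lemma abs_entry_le_sum_abs:
  fixes A :: "'a::linordered_idom^'n^'m"
  shows "\<bar>A$i$j\<bar> \<le> (\<Sum>i\<in>UNIV. \<Sum>j\<in>UNIV. \<bar>A$i$j\<bar>)"
proof -
  have "\<bar>A$i$j\<bar> \<le> (\<Sum>j\<in>UNIV. \<bar>A$i$j\<bar>)"
    by (rule member_le_sum[of j UNIV "\<lambda>j. \<bar>A$i$j\<bar>"]) auto
  also have "\<dots> \<le> (\<Sum>i\<in>UNIV. \<Sum>j\<in>UNIV. \<bar>A$i$j\<bar>)"
    by (rule member_le_sum[of i UNIV "\<lambda>i. \<Sum>j\<in>UNIV. \<bar>A$i$j\<bar>"]) (auto intro: sum_nonneg)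
  finally show ?thesis .
qed

lemma abs_det_le_if_small_block:
  fixes G :: "real^3^3"
  assumes "\<bar>G$1$1\<bar> \<le> d" "\<bar>G$1$2\<bar> \<le> d" "\<bar>G$2$1\<bar> \<le> d" "\<bar>G$2$2\<bar> \<le> d"
    and "\<forall>i j. \<bar>G$i$j\<bar> \<le> X"
  shows "\<bar>det G\<bar> \<le> 6 * d * X\<^sup>2"
proof -
  have X: "\<bar>G$i$j\<bar> \<le> X" for i j
    using assms(5) by blast
  have "\<bar>G$1$1 * G$2$2 * G$3$3\<bar> \<le> d * X * X" "\<bar>G$1$2 * G$2$3 * G$3$1\<bar> \<le> d * X * X"
    "\<bar>G$1$3 * G$2$1 * G$3$2\<bar> \<le> X * d * X" "\<bar>G$1$1 * G$2$3 * G$3$2\<bar> \<le> d * X * X"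
    "\<bar>G$1$2 * G$2$1 * G$3$3\<bar> \<le> d * X * X" "\<bar>G$1$3 * G$2$2 * G$3$1\<bar> \<le> X * d * X"
    using assms(1-4) X by (blast intro: abs_mult3_le)+
  then show ?thesis
    unfolding det_3 by (simp add: power2_eq_square algebra_simps)
qed

lemma abs_det_diff_le:
  fixes A B :: "real^3^3"
  assumes "\<forall>i j. \<bar>A$i$j\<bar> \<le> a" "\<forall>i j. \<bar>B$i$j\<bar> \<le> a" "\<forall>i j. \<bar>A$i$j - B$i$j\<bar> \<le> w"
  shows "\<bar>det A - det B\<bar> \<le> 18 * a\<^sup>2 * w"
proof -
  have "\<bar>A$i$j * A$k$l * A$m$n - B$i$j * B$k$l * B$m$n\<bar> \<le> 3 * a\<^sup>2 * w" for i j k l m n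
  proof -
    have "A$i$j * A$k$l * A$m$n - B$i$j * B$k$l * B$m$n
        = (A$i$j - B$i$j) * A$k$l * A$m$n + B$i$j * (A$k$l - B$k$l) * A$m$n
          + B$i$j * B$k$l * (A$m$n - B$m$n)"
      by (simp add: algebra_simps)
    moreover have "\<bar>(A$i$j - B$i$j) * A$k$l * A$m$n\<bar> \<le> w * a * a"
      "\<bar>B$i$j * (A$k$l - B$k$l) * A$m$n\<bar> \<le> a * w * a"
      "\<bar>B$i$j * B$k$l * (A$m$n - B$m$n)\<bar> \<le> a * a * w"
      using assms by (blast intro: abs_mult3_le)+
    ultimately show ?thesis
      by (simp add: power2_eq_square algebra_simps)
  qed
  from this[of 1 1 2 2 3 3] this[of 1 2 2 3 3 1] this[of 1 3 2 1 3 2]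
    this[of 1 1 2 3 3 2] this[of 1 2 2 1 3 3] this[of 1 3 2 2 3 1]
  show ?thesis
    unfolding det_3 by (simp add: abs_le_iff)
qed

lemma finite_qcoeffs: "finite (qcoeffs A)"
proof -
  have "qcoeffs A \<subseteq> (\<lambda>(i, j). A$i$j) ` UNIV \<union> (\<lambda>(i, j). 2 * A$i$j) ` UNIV"
    unfolding qcoeffs_def by auto
  then show ?thesis
    by (rule finite_subset) simp
qed

lemma qnorm_le:
  assumes "\<forall>i j. \<bar>A$i$j\<bar> \<le> X" "0 \<le> X" shows "qnorm A \<le> 2 * X"
proof -
  have "\<bar>y\<bar> \<le> 2 * X" if y: "y \<in> qcoeffs A" for y
  proof -
    obtain i j where "y = A$i$i \<or> y = 2 * A$i$j"
      using y unfolding qcoeffs_def by auto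
    then show ?thesis
      using assms(1)[rule_format, of i i] assms(1)[rule_format, of i j] assms(2) by auto
  qed
  then show ?thesis
    unfolding qnorm_def using finite_qcoeffs[of A] by (subst Max_le_iff) (auto simp: qcoeffs_def)
qed

lemma abs_entry_le_qnorm: "\<bar>A$i$j\<bar> \<le> qnorm A"
proof -
  have le: "\<bar>y\<bar> \<le> qnorm A" if "y \<in> qcoeffs A" for y
    unfolding qnorm_def using that by (simp add: finite_qcoeffs)
  show ?thesis
  proof (cases "i = j")
    case True
    then show ?thesis
      by (intro le) (auto simp: qcoeffs_def)
  next
    case False
    then have "\<bar>2 * A$i$j\<bar> \<le> qnorm A"
      by (intro le) (auto simp: qcoeffs_def)
    then show ?thesis
      by simp
  qed
qed

lemma qnorm_pos: "A \<noteq> 0 \<Longrightarrow> 0 < qnorm A"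
  by (metis abs_entry_le_qnorm zero_less_abs_iff order_less_le_trans vec_eq_iff zero_index)

lemma det_gram_small_block:
  fixes Q :: "real^3^3"
  assumes symQ: "symmetric_form Q" and detQ: "det Q = -1" and Qb: "\<forall>i j. \<bar>Q$i$j\<bar> \<le> q"
    and bounds: "supn x \<le> Z" "supn y \<le> Z" "supn w \<le> Z"
    and block: "\<bar>qf Q x\<bar> \<le> \<delta>" "\<bar>qf Q y\<bar> \<le> \<delta>" "\<bar>x \<bullet> (Q *v y)\<bar> \<le> \<delta>"
  shows "(det (vector [x, y, w] :: real^3^3))\<^sup>2 \<le> 6 * \<delta> * (9 * q * Z\<^sup>2)\<^sup>2"
proof -
  define F where "F = (vector [x, y, w] :: real^3^3)"
  define G where "G = F ** Q ** transpose F"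
  have G: "G$i$j = F$i \<bullet> (Q *v F$j)" for i j
    by (simp add: G_def matrix_matrix_mult_def transpose_def inner_vec_def matrix_vector_mult_def
        sum_3 algebra_simps)
  have "supn (F$i) \<le> Z" for i
    using bounds exhaust_3[of i] by (auto simp: F_def)
  then have "\<forall>i j. \<bar>G$i$j\<bar> \<le> 9 * q * Z\<^sup>2"
    using abs_inner_matrix_le[OF Qb] by (simp add: G power2_eq_square algebra_simps)
  moreover have "\<bar>G$1$1\<bar> \<le> \<delta>" "\<bar>G$1$2\<bar> \<le> \<delta>" "\<bar>G$2$1\<bar> \<le> \<delta>" "\<bar>G$2$2\<bar> \<le> \<delta>"
    using block inner_matrix_commute[OF symQ, of y x] by (simp_all add: G F_def qf_def)
  ultimately have "\<bar>det G\<bar> \<le> 6 * \<delta> * (9 * q * Z\<^sup>2)\<^sup>2"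
    by (intro abs_det_le_if_small_block)
  moreover have "det G = - (det F)\<^sup>2"
    by (simp add: G_def det_mul det_transpose detQ power2_eq_square)
  ultimately show ?thesis
    by (simp add: F_def)
qed

section \<open>No three small values on a plane\<close>

lemma coplanar_cramer:
  assumes coplanar: "(z1 \<times> z2) \<bullet> z3 = 0" and indep: "z1 \<times> z2 \<noteq> 0" "z2 \<times> z3 \<noteq> 0" "z3 \<times> z1 \<noteq> 0"
  defines "c \<equiv> z1 \<times> z2"
  shows "(c \<bullet> c) *\<^sub>R z3 = ((z3 \<times> z2) \<bullet> c) *\<^sub>R z1 + ((z1 \<times> z3) \<bullet> c) *\<^sub>R z2"
    and "(z3 \<times> z2) \<bullet> c \<noteq> 0" "(z1 \<times> z3) \<bullet> c \<noteq> 0"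
proof -
  show plane: "(c \<bullet> c) *\<^sub>R z3 = ((z3 \<times> z2) \<bullet> c) *\<^sub>R z1 + ((z1 \<times> z3) \<bullet> c) *\<^sub>R z2"
    using cross3_triple_cramer[of z1 z2 c z3] coplanar by (simp add: c_def)
  have "c \<bullet> c \<noteq> 0"
    using indep(1) by (simp add: c_def)
  show "(z3 \<times> z2) \<bullet> c \<noteq> 0"
  proof
    assume "(z3 \<times> z2) \<bullet> c = 0"
    then have "(c \<bullet> c) *\<^sub>R (z3 \<times> z2) = 0"
      using arg_cong[OF plane, of "\<lambda>v. v \<times> z2"] by (simp add: cross_mult_left)
    with \<open>c \<bullet> c \<noteq> 0\<close> indep(2) show False
      by (simp add: cross_skew[of z3])
  qed
  show "(z1 \<times> z3) \<bullet> c \<noteq> 0"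
  proof
    assume "(z1 \<times> z3) \<bullet> c = 0"
    then have "(c \<bullet> c) *\<^sub>R (z3 \<times> z1) = 0"
      using arg_cong[OF plane, of "\<lambda>v. v \<times> z1"] by (simp add: cross_mult_left)
    with \<open>c \<bullet> c \<noteq> 0\<close> indep(3) show False
      by simp
  qed
qed

lemma abs_mixed_term_le:
  fixes Q :: "real^3^3"
  assumes symQ: "symmetric_form Q" and plane: "N *\<^sub>R z3 = A *\<^sub>R z1 + B *\<^sub>R z2"
    and AB: "A \<in> \<int>" "B \<in> \<int>" "A \<noteq> 0" "B \<noteq> 0"
    and C: "N\<^sup>2 \<le> C" "A\<^sup>2 \<le> C" "B\<^sup>2 \<le> C"
    and small: "\<bar>qf Q z1\<bar> \<le> \<epsilon>" "\<bar>qf Q z2\<bar> \<le> \<epsilon>" "\<bar>qf Q z3\<bar> \<le> \<epsilon>"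
  shows "\<bar>z1 \<bullet> (Q *v z2)\<bar> \<le> 3 / 2 * C * \<epsilon>"
proof -
  define b where "b = z1 \<bullet> (Q *v z2)"
  have "N\<^sup>2 * qf Q z3 = A\<^sup>2 * qf Q z1 + 2 * A * B * b + B\<^sup>2 * qf Q z2"
    using arg_cong[OF plane, of "qf Q"] by (simp add: qf_scaleR qf_lincomb2[OF symQ] b_def)
  moreover have "\<bar>X * qf Q z\<bar> \<le> C * \<epsilon>" if "0 \<le> X" "X \<le> C" "\<bar>qf Q z\<bar> \<le> \<epsilon>" for X z
    using mult_mono[OF that(2,3) order_trans[OF that(1,2)] abs_ge_zero] that(1) by (simp add: abs_mult)
  then have "\<bar>N\<^sup>2 * qf Q z3\<bar> \<le> C * \<epsilon>" "\<bar>A\<^sup>2 * qf Q z1\<bar> \<le> C * \<epsilon>" "\<bar>B\<^sup>2 * qf Q z2\<bar> \<le> C * \<epsilon>"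
    using C small by simp_all
  ultimately have "\<bar>2 * A * B * b\<bar> \<le> 3 * C * \<epsilon>"
    by linarith
  moreover have "1 \<le> \<bar>A * B\<bar>"
    using AB by (simp add: Ints_nonzero_abs_ge1)
  then have "\<bar>b\<bar> \<le> \<bar>A * B\<bar> * \<bar>b\<bar>"
    by (simp add: mult_le_cancel_right1)
  ultimately show ?thesis
    by (simp add: b_def abs_mult algebra_simps)
qed

lemma cross3_triple_ne_0_if_small_values:
  fixes Q :: "real^3^3"
  assumes symQ: "symmetric_form Q" and detQ: "det Q = -1" and Qb: "\<forall>i j. \<bar>Q$i$j\<bar> \<le> q"
    and Z: "1 \<le> Z"
    and int: "integral_vec z1" "integral_vec z2" "integral_vec z3"
    and bound: "supn z1 \<le> Z" "supn z2 \<le> Z" "supn z3 \<le> Z"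
    and small: "\<bar>qf Q z1\<bar> \<le> \<epsilon>" "\<bar>qf Q z2\<bar> \<le> \<epsilon>" "\<bar>qf Q z3\<bar> \<le> \<epsilon>"
    and indep: "z1 \<times> z2 \<noteq> 0" "z2 \<times> z3 \<noteq> 0" "z3 \<times> z1 \<noteq> 0"
    and \<epsilon>: "(1296 * q * Z^8)\<^sup>2 * \<epsilon> < 1"
  shows "(z1 \<times> z2) \<bullet> z3 \<noteq> 0"
proof
  assume coplanar: "(z1 \<times> z2) \<bullet> z3 = 0"
  define c where "c = z1 \<times> z2"
  define N where "N = c \<bullet> c"
  have Z2: "supn c \<le> 2 * Z * Z" "supn (z3 \<times> z2) \<le> 2 * Z * Z" "supn (z1 \<times> z3) \<le> 2 * Z * Z"
    using bound by (simp_all add: c_def supn_cross3_le)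
  have sq: "x\<^sup>2 \<le> 144 * Z^8" if "x = u \<bullet> c" "supn u \<le> 2 * Z * Z" for x u
  proof -
    have "x\<^sup>2 = \<bar>x\<bar>\<^sup>2"
      by simp
    also have "\<dots> \<le> (3 * (2 * Z * Z) * (2 * Z * Z))\<^sup>2"
      using abs_inner_le[OF that(2) Z2(1)] that(1) by (intro power_mono) auto
    also have "\<dots> = 144 * Z^8"
      by algebra
    finally show ?thesis .
  qed
  define A where "A = (z3 \<times> z2) \<bullet> c"
  define B where "B = (z1 \<times> z3) \<bullet> c"
  have plane: "N *\<^sub>R z3 = A *\<^sub>R z1 + B *\<^sub>R z2" "A \<noteq> 0" "B \<noteq> 0"
    using coplanar_cramer[OF coplanar indep] by (simp_all add: N_def A_def B_def c_def)
  have Ints: "N \<in> \<int>" "A \<in> \<int>" "B \<in> \<int>"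
    using int by (simp_all add: N_def A_def B_def c_def Ints_inner integral_vec_cross3)
  have "N\<^sup>2 \<le> 144 * Z^8" "A\<^sup>2 \<le> 144 * Z^8" "B\<^sup>2 \<le> 144 * Z^8"
    using sq Z2 by (simp_all add: N_def A_def B_def)
  then have "\<bar>z1 \<bullet> (Q *v z2)\<bar> \<le> 3 / 2 * (144 * Z^8) * \<epsilon>"
    using abs_mixed_term_le[OF symQ plane(1) Ints(2,3) plane(2,3) _ _ _ small] by blast
  moreover have "\<epsilon> \<le> 216 * Z^8 * \<epsilon>"
  proof -
    have "1 \<le> Z^8"
      using Z by simp
    then have "1 \<le> 216 * Z^8"
      by linarith
    then show ?thesis
      using mult_right_mono[of 1 "216 * Z^8" \<epsilon>] small(1) by simp
  qed
  moreover have "Z \<le> 2 * Z * Z"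
    using mult_left_mono[of 1 "2 * Z" Z] Z by (simp add: mult.assoc)
  text \<open>The Gram matrix of \<open>z1, z2, c\<close> has determinant \<open>-N\<^sup>2\<close> but a small upper-left block.\<close>
  ultimately have "(det (vector [z1, z2, c] :: real^3^3))\<^sup>2 \<le> 6 * (216 * Z^8 * \<epsilon>) * (9 * q * (2 * Z * Z)\<^sup>2)\<^sup>2"
    using bound Z2(1) small by (intro det_gram_small_block[OF symQ detQ Qb]) auto
  moreover have "det (vector [z1, z2, c] :: real^3^3) = N"
    by (simp add: N_def c_def cross3_simps)
  moreover have "N \<noteq> 0"
    using indep(1) by (simp add: N_def c_def)
  then have "1 \<le> N\<^sup>2"
    using Ints_nonzero_abs_ge1[OF Ints(1)] abs_le_square_iff[of 1 N] by simp
  moreover have "6 * (216 * Z^8 * \<epsilon>) * (9 * q * (2 * Z * Z)\<^sup>2)\<^sup>2 = (1296 * q * Z^8)\<^sup>2 * \<epsilon>"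
    by algebra
  ultimately show False
    using \<epsilon> by (metis order.trans not_le)
qed

section \<open>Conics through five points\<close>

definition general_position :: "(real^3) set \<Rightarrow> bool" where
  "general_position Z \<longleftrightarrow> (\<forall>a\<in>Z. \<forall>b\<in>Z. \<forall>c\<in>Z. distinct [a, b, c] \<longrightarrow> (a \<times> b) \<bullet> c \<noteq> 0)"

lemma general_positionD:
  "general_position Z \<Longrightarrow> a \<in> Z \<Longrightarrow> b \<in> Z \<Longrightarrow> c \<in> Z \<Longrightarrow> distinct [a, b, c] \<Longrightarrow> (a \<times> b) \<bullet> c \<noteq> 0"
  by (simp add: general_position_def)

lemma general_position_if_pairwise_independent:
  fixes Q :: "real^3^3" and D :: "(real^3) set"
  assumes symQ: "symmetric_form Q" and detQ: "det Q = -1" and Qb: "\<forall>i j. \<bar>Q$i$j\<bar> \<le> q"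
    and Z: "1 \<le> Z"
    and D: "\<And>z. z \<in> D \<Longrightarrow> integral_vec z \<and> supn z \<le> Z \<and> \<bar>qf Q z\<bar> \<le> \<epsilon>"
    and indep: "pairwise (\<lambda>a b. a \<times> b \<noteq> 0) D"
    and \<epsilon>: "(1296 * q * Z^8)\<^sup>2 * \<epsilon> < 1"
  shows "general_position D"
  unfolding general_position_def
proof (intro ballI impI)
  fix a b d
  assume "a \<in> D" "b \<in> D" "d \<in> D" "distinct [a, b, d]"
  moreover from this have "a \<times> b \<noteq> 0" "b \<times> d \<noteq> 0" "d \<times> a \<noteq> 0"
    using pairwiseD[OF indep] by auto
  ultimately show "(a \<times> b) \<bullet> d \<noteq> 0"
    by (intro cross3_triple_ne_0_if_small_values[OF symQ detQ Qb Z _ _ _ _ _ _ _ _ _ _ _ _ \<epsilon>])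
      (simp_all add: D)
qed

lemma exists_small_interpolating_form:
  assumes gp: "general_position {z1, z2, z3, z4, z5}" and dist: "distinct [z1, z2, z3, z4, z5]"
    and int: "integral_vec z1" "integral_vec z2" "integral_vec z3" "integral_vec z4" "integral_vec z5"
    and bound: "supn z1 \<le> Z" "supn z2 \<le> Z" "supn z3 \<le> Z" "supn z4 \<le> Z" "supn z5 \<le> Z"
    and y: "\<bar>y1\<bar> \<le> \<epsilon>" "\<bar>y2\<bar> \<le> \<epsilon>" "\<bar>y3\<bar> \<le> \<epsilon>" "\<bar>y4\<bar> \<le> \<epsilon>" "\<bar>y5\<bar> \<le> \<epsilon>"
  shows "\<exists>W. symmetric_form W \<and> qf W z1 = y1 \<and> qf W z2 = y2 \<and> qf W z3 = y3 \<and> qf W z4 = y4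
    \<and> qf W z5 = y5 \<and> (\<forall>i j. \<bar>W$i$j\<bar> \<le> 20 * Z^4 * \<epsilon>)"
proof -
  define z where "z k = [z1, z2, z3, z4, z5] ! k" for k
  define y where "y k = [y1, y2, y3, y4, y5] ! k" for k
  define a where "a k = [z2 \<times> z3, z1 \<times> z3, z1 \<times> z2, z1 \<times> z2, z1 \<times> z2] ! k" for k
  define b where "b k = [z4 \<times> z5, z4 \<times> z5, z4 \<times> z5, z3 \<times> z5, z3 \<times> z4] ! k" for k
  define P where "P k = sym_outer (a k) (b k)" for k
  define W where "W = (\<Sum>k<5. (y k / qf (P k) (z k)) *\<^sub>R P k)"
  have five: "k < 5 \<longleftrightarrow> k = 0 \<or> k = 1 \<or> k = 2 \<or> k = 3 \<or> k = 4" for k :: nat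
    by auto
  text \<open>The form \<open>P k\<close> is a pair of planes through the four points other than \<open>z k\<close>.\<close>
  have vanish: "qf (P j) (z k) = 0" if "j < 5" "k < 5" "j \<noteq> k" for j k
    using that unfolding five
    by (auto simp: P_def a_def b_def z_def qf_sym_outer cross3_triple_repeat)
  have nonzero: "qf (P k) (z k) \<noteq> 0" if "k < 5" for k
    using that dist unfolding five
    by (auto simp: P_def a_def b_def z_def qf_sym_outer elim!: general_positionD[OF gp, THEN notE, rotated 4])
  have Ints: "qf (P k) (z k) \<in> \<int>" if "k < 5" for k
    using that int unfolding five
    by (auto simp: P_def a_def b_def z_def qf_sym_outer Ints_inner integral_vec_cross3)
  have ab: "supn (a k) \<le> 2 * Z * Z" "supn (b k) \<le> 2 * Z * Z" if "k < 5" for k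
    using that bound unfolding five by (auto simp: a_def b_def supn_cross3_le)
  have interpolates: "qf W (z k) = y k" if "k < 5" for k
  proof -
    have "qf W (z k) = (\<Sum>j<5. y j / qf (P j) (z j) * qf (P j) (z k))"
      by (simp add: W_def qf_matrix_sum qf_matrix_scaleR)
    also have "\<dots> = y k / qf (P k) (z k) * qf (P k) (z k)
        + (\<Sum>j\<in>{..<5} - {k}. y j / qf (P j) (z j) * qf (P j) (z k))"
      using that by (intro sum.remove) auto
    also have "\<dots> = y k"
      using that nonzero vanish by simp
    finally show ?thesis .
  qed
  moreover have "symmetric_form W"
    unfolding W_def P_def
    by (intro symmetric_form_sum symmetric_form_scaleR symmetric_form_sym_outer) simp
  moreover have "\<bar>W$i$j\<bar> \<le> 20 * Z^4 * \<epsilon>" for i j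
  proof -
    have "\<bar>y k / qf (P k) (z k) * P k $ i $ j\<bar> \<le> \<epsilon> * (4 * Z^4)" if "k < 5" for k
    proof (rule abs_mult_le)
      have "\<bar>y k\<bar> \<le> \<epsilon>"
        using that y unfolding five by (auto simp: y_def)
      then show "\<bar>y k / qf (P k) (z k)\<bar> \<le> \<epsilon>"
        using abs_divide_Ints_le[OF Ints nonzero, OF that that, of "y k"] by linarith
      show "\<bar>P k $ i $ j\<bar> \<le> 4 * Z^4"
        using abs_sym_outer_le[OF ab[OF that]] by (simp add: P_def power4_eq_xxxx algebra_simps)
    qed
    then have "(\<Sum>k<5. \<bar>y k / qf (P k) (z k) * P k $ i $ j\<bar>) \<le> (\<Sum>k<5::nat. \<epsilon> * (4 * Z^4))"
      by (intro sum_mono) simp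
    moreover have "\<bar>W$i$j\<bar> \<le> (\<Sum>k<5. \<bar>y k / qf (P k) (z k) * P k $ i $ j\<bar>)"
      unfolding W_def sum_component by (rule order_trans[OF sum_abs]) simp
    ultimately show ?thesis
      by (simp add: algebra_simps)
  qed
  ultimately show ?thesis
    using interpolates[of 0] interpolates[of 1] interpolates[of 2] interpolates[of 3]
      interpolates[of 4]
    by (intro exI[of _ W]) (simp add: z_def y_def numeral_eq_Suc)
qed

lemma symmetric_form_eq_0_if_vanishes_on_six:
  assumes symH: "symmetric_form H"
    and gp: "general_position {z1, z2, z3, z4, z5}" and dist: "distinct [z1, z2, z3, z4, z5]"
    and vanish: "qf H z1 = 0" "qf H z2 = 0" "qf H z3 = 0" "qf H z4 = 0" "qf H z5 = 0"
      "qf H (z1 + z2) = 0"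
  shows "H = 0"
proof -
  have nz: "(z1 \<times> z2) \<bullet> z3 \<noteq> 0" "(z1 \<times> z2) \<bullet> z4 \<noteq> 0" "(z1 \<times> z2) \<bullet> z5 \<noteq> 0"
    "(z4 \<times> z5) \<bullet> z3 \<noteq> 0"
    by (rule general_positionD[OF gp]; use dist in auto)+
  define d where "d = (z1 \<times> z2) \<bullet> z3"
  define l1 where "l1 x = (x \<times> z2) \<bullet> z3" for x
  define l2 where "l2 x = (z1 \<times> x) \<bullet> z3" for x
  define b13 where "b13 = z1 \<bullet> (H *v z3)"
  define b23 where "b23 = z2 \<bullet> (H *v z3)"
  have "z1 \<bullet> (H *v z2) = 0"
    using qf_add[OF symH, of z1 z2] vanish by simp
  text \<open>Expanding \<open>x\<close> in the basis \<open>z1, z2, z3\<close> (Cramer's rule), on which \<open>H\<close> vanishes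
    except for the mixed terms with \<open>z3\<close>.\<close>
  then have key: "d\<^sup>2 * qf H x = 2 * ((z1 \<times> z2) \<bullet> x) * (l1 x * b13 + l2 x * b23)" for x
  proof -
    have "d\<^sup>2 * qf H x = qf H (l1 x *\<^sub>R z1 + l2 x *\<^sub>R z2 + ((z1 \<times> z2) \<bullet> x) *\<^sub>R z3)"
      by (simp add: d_def l1_def l2_def qf_scaleR flip: cross3_triple_cramer)
    also have "\<dots> = 2 * ((z1 \<times> z2) \<bullet> x) * (l1 x * b13 + l2 x * b23)"
      using \<open>z1 \<bullet> (H *v z2) = 0\<close> vanish unfolding qf_lincomb3[OF symH]
      by (simp add: b13_def b23_def algebra_simps)
    finally show ?thesis .
  qed
  have e4: "l1 z4 * b13 + l2 z4 * b23 = 0" and e5: "l1 z5 * b13 + l2 z5 * b23 = 0"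
    using key[of z4] key[of z5] vanish nz by simp_all
  define \<Delta> where "\<Delta> = l1 z4 * l2 z5 - l1 z5 * l2 z4"
  have "\<Delta> \<noteq> 0"
    using cross3_triple_pluecker[of z4 z2 z3 z1 z5] nz by (simp add: \<Delta>_def l1_def l2_def)
  moreover have "b13 * \<Delta> = l2 z5 * (l1 z4 * b13 + l2 z4 * b23) - l2 z4 * (l1 z5 * b13 + l2 z5 * b23)"
    "b23 * \<Delta> = l1 z4 * (l1 z5 * b13 + l2 z5 * b23) - l1 z5 * (l1 z4 * b13 + l2 z4 * b23)"
    by (simp_all add: \<Delta>_def algebra_simps)
  then have "b13 * \<Delta> = 0" "b23 * \<Delta> = 0"
    by (simp_all only: e4 e5 mult_zero_right diff_self)
  ultimately have "b13 = 0" "b23 = 0"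
    by simp_all
  then have "qf H x = 0" for x
    using key[of x] nz(1) by (simp add: d_def)
  then show ?thesis
    by (rule symmetric_form_eq_0_if_qf_eq_0[OF symH])
qed

lemma proportional_if_vanish_on_five:
  assumes symH: "symmetric_form H" and symP: "symmetric_form P"
    and gp: "general_position {z1, z2, z3, z4, z5}" and dist: "distinct [z1, z2, z3, z4, z5]"
    and H: "qf H z1 = 0" "qf H z2 = 0" "qf H z3 = 0" "qf H z4 = 0" "qf H z5 = 0"
    and P: "qf P z1 = 0" "qf P z2 = 0" "qf P z3 = 0" "qf P z4 = 0" "qf P z5 = 0"
    and P12: "qf P (z1 + z2) \<noteq> 0"
  shows "H = (qf H (z1 + z2) / qf P (z1 + z2)) *\<^sub>R P"
proof -
  have "H - (qf H (z1 + z2) / qf P (z1 + z2)) *\<^sub>R P = 0"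
    using H P P12
    by (intro symmetric_form_eq_0_if_vanishes_on_six[OF _ gp dist])
      (simp_all add: symmetric_form_diff symmetric_form_scaleR symH symP qf_matrix_diff
        qf_matrix_scaleR)
  then show ?thesis
    by simp
qed

text \<open>The pencil of conics through \<open>z1, \<dots>, z4\<close> is spanned by the line pairs
  \<open>z1 z2, z3 z4\<close> and \<open>z1 z3, z2 z4\<close>; the coefficients select the member through \<open>z5\<close>.\<close>
definition conic5 :: "real^3 \<Rightarrow> real^3 \<Rightarrow> real^3 \<Rightarrow> real^3 \<Rightarrow> real^3 \<Rightarrow> real^3^3" where
  "conic5 z1 z2 z3 z4 z5 =
     ((z1 \<times> z3) \<bullet> z5 * ((z2 \<times> z4) \<bullet> z5)) *\<^sub>R sym_outer (z1 \<times> z2) (z3 \<times> z4)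
   - ((z1 \<times> z2) \<bullet> z5 * ((z3 \<times> z4) \<bullet> z5)) *\<^sub>R sym_outer (z1 \<times> z3) (z2 \<times> z4)"

lemma qf_conic5:
  "qf (conic5 z1 z2 z3 z4 z5) x =
     (z1 \<times> z3) \<bullet> z5 * ((z2 \<times> z4) \<bullet> z5) * ((z1 \<times> z2) \<bullet> x) * ((z3 \<times> z4) \<bullet> x)
   - (z1 \<times> z2) \<bullet> z5 * ((z3 \<times> z4) \<bullet> z5) * ((z1 \<times> z3) \<bullet> x) * ((z2 \<times> z4) \<bullet> x)"
  by (simp add: conic5_def qf_matrix_diff qf_matrix_scaleR qf_sym_outer)

lemma qf_conic5_vanishes:
  "qf (conic5 z1 z2 z3 z4 z5) z1 = 0" "qf (conic5 z1 z2 z3 z4 z5) z2 = 0"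
  "qf (conic5 z1 z2 z3 z4 z5) z3 = 0" "qf (conic5 z1 z2 z3 z4 z5) z4 = 0"
  "qf (conic5 z1 z2 z3 z4 z5) z5 = 0"
  by (simp_all add: qf_conic5 cross3_triple_repeat)

lemma symmetric_form_conic5: "symmetric_form (conic5 z1 z2 z3 z4 z5)"
  by (simp add: conic5_def symmetric_form_diff symmetric_form_scaleR symmetric_form_sym_outer)

lemma integral_form_conic5:
  assumes "integral_vec z1" "integral_vec z2" "integral_vec z3" "integral_vec z4" "integral_vec z5"
  shows "integral_form (conic5 z1 z2 z3 z4 z5)"
  using assms unfolding conic5_def
  by (intro integral_form_diff integral_form_scaleR integral_form_sym_outer Ints_mult Ints_inner
      integral_vec_cross3)

lemma qf_conic5_ne_0:
  assumes gp: "general_position {z1, z2, z3, z4, z5}" and dist: "distinct [z1, z2, z3, z4, z5]"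
  shows "qf (conic5 z1 z2 z3 z4 z5) (z1 + z2) \<noteq> 0"
proof -
  have "(z1 \<times> z2) \<bullet> z5 \<noteq> 0" "(z3 \<times> z4) \<bullet> z5 \<noteq> 0" "(z1 \<times> z3) \<bullet> z2 \<noteq> 0" "(z2 \<times> z4) \<bullet> z1 \<noteq> 0"
    by (rule general_positionD[OF gp]; use dist in auto)+
  then show ?thesis
    by (simp add: qf_conic5 inner_add_right cross3_triple_repeat)
qed

lemma abs_conic5_entry_le:
  assumes "supn z1 \<le> Z" "supn z2 \<le> Z" "supn z3 \<le> Z" "supn z4 \<le> Z" "supn z5 \<le> Z"
  shows "\<bar>conic5 z1 z2 z3 z4 z5 $ i $ j\<bar> \<le> 288 * Z^10"
proof -
  have "\<bar>(a \<times> b) \<bullet> z5 * ((c \<times> d) \<bullet> z5) * sym_outer (a \<times> c) (b \<times> d) $ i $ j\<bar> \<le> 144 * Z^10"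
    if "a \<in> {z1, z2, z3, z4}" "b \<in> {z1, z2, z3, z4}" "c \<in> {z1, z2, z3, z4}" "d \<in> {z1, z2, z3, z4}"
    for a b c d
  proof -
    have "supn a \<le> Z" "supn b \<le> Z" "supn c \<le> Z" "supn d \<le> Z"
      using that assms by auto
    then have "\<bar>(a \<times> b) \<bullet> z5 * ((c \<times> d) \<bullet> z5) * sym_outer (a \<times> c) (b \<times> d) $ i $ j\<bar>
        \<le> 6 * Z^3 * (6 * Z^3) * (2 * Z * Z * (2 * Z * Z))"
      by (intro abs_mult3_le abs_cross3_triple_le abs_sym_outer_le supn_cross3_le assms(5))
    moreover have "6 * Z^3 * (6 * Z^3) * (2 * Z * Z * (2 * Z * Z)) = 144 * Z^10"
      by algebra
    ultimately show ?thesis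
      by simp
  qed
  from this[of z1 z3 z2 z4] this[of z1 z2 z3 z4] show ?thesis
    by (simp add: conic5_def abs_le_iff)
qed

section \<open>Rational approximation of the form\<close>

lemma abs_1_minus_le_abs_1_minus_cube:
  fixes r :: real
  assumes "0 < r" shows "\<bar>1 - r\<bar> \<le> \<bar>1 - r^3\<bar>"
proof -
  have "1 - r^3 = (1 - r) * (1 + r + r\<^sup>2)"
    by (simp add: power2_eq_square power3_eq_cube algebra_simps)
  moreover have "1 \<le> 1 + r + r\<^sup>2"
    using assms by simp
  ultimately show ?thesis
    using mult_left_mono[of 1 "1 + r + r\<^sup>2" "\<bar>1 - r\<bar>"] by (simp add: abs_mult)
qed

lemma rescaling_factor_close_to_1:
  fixes D \<kappa> d \<theta> :: real
  assumes D1: "\<bar>D - 1\<bar> \<le> \<theta>" and \<theta>: "\<theta> \<le> 1 / 2" and D: "D = \<kappa>^3 * d"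
  shows "d \<noteq> 0" "\<kappa> \<noteq> 0" "\<bar>1 - root 3 (inverse d) / \<kappa>\<bar> \<le> 2 * \<theta>"
proof -
  have "1 / 2 \<le> D" "0 \<le> \<theta>"
    using D1 \<theta> by linarith+
  then show "d \<noteq> 0" "\<kappa> \<noteq> 0"
    using D by auto
  define r where "r = root 3 (inverse d) / \<kappa>"
  have r3: "r^3 = 1 / D"
    using D \<open>d \<noteq> 0\<close> \<open>\<kappa> \<noteq> 0\<close> by (simp add: r_def power_divide odd_real_root_pow field_simps)
  have "0 < r"
  proof (rule ccontr)
    assume "\<not> 0 < r"
    then have "r^3 \<le> 0"
      using mult_nonneg_nonpos[of "r * r" r] by (simp add: power3_eq_cube)
    with r3 \<open>1 / 2 \<le> D\<close> show False
      by simp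
  qed
  have "1 - r^3 = (D - 1) / D"
    using r3 \<open>1 / 2 \<le> D\<close> by (simp add: field_simps)
  then have "\<bar>1 - r^3\<bar> = \<bar>D - 1\<bar> / D"
    using \<open>1 / 2 \<le> D\<close> by (simp add: abs_divide)
  also have "\<dots> \<le> 2 * \<theta>"
    using D1 mult_left_mono[of 1 "2 * D" \<theta>] \<open>1 / 2 \<le> D\<close> \<open>0 \<le> \<theta>\<close> by (simp add: divide_le_eq)
  finally show "\<bar>1 - root 3 (inverse d) / \<kappa>\<bar> \<le> 2 * \<theta>"
    using abs_1_minus_le_abs_1_minus_cube[OF \<open>0 < r\<close>] by (simp add: r_def)
qed

lemma normalized_multiple_approximates:
  fixes Q H P :: "real^3^3"
  assumes detQ: "qdet Q = 1" and a: "1 \<le> a"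
    and Qa: "\<forall>i j. \<bar>Q$i$j\<bar> \<le> a" and Ha: "\<forall>i j. \<bar>H$i$j\<bar> \<le> a"
    and close: "\<forall>i j. \<bar>Q$i$j - H$i$j\<bar> \<le> w" and w: "18 * a\<^sup>2 * w \<le> 1 / 2"
    and HP: "H = \<kappa> *\<^sub>R P"
  shows "qdet P \<noteq> 0" and "qnorm (Q - root 3 (inverse (qdet P)) *\<^sub>R P) \<le> 74 * a^3 * w"
proof -
  define \<rho> where "\<rho> = root 3 (inverse (qdet P))"
  define r where "r = \<rho> / \<kappa>"
  have w0: "0 \<le> w"
    using close by (meson abs_ge_zero order_trans)
  have "\<bar>qdet H - 1\<bar> \<le> 18 * a\<^sup>2 * w"
    using abs_det_diff_le[OF Qa Ha close] detQ by (simp add: qdet_def)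
  moreover have "qdet H = \<kappa>^3 * qdet P"
    by (simp add: HP qdet_def det_3 algebra_simps power3_eq_cube)
  ultimately have "qdet P \<noteq> 0" "\<kappa> \<noteq> 0" and r: "\<bar>1 - r\<bar> \<le> 2 * (18 * a\<^sup>2 * w)"
    using rescaling_factor_close_to_1[OF _ w] by (simp_all add: r_def \<rho>_def)
  then show "qdet P \<noteq> 0"
    by simp
  have split: "Q - \<rho> *\<^sub>R P = (Q - H) + (1 - r) *\<^sub>R H"
    using \<open>\<kappa> \<noteq> 0\<close> by (simp add: HP r_def algebra_simps)
  have "\<bar>(Q - \<rho> *\<^sub>R P)$i$j\<bar> \<le> w + 36 * a^3 * w" for i j
  proof -
    have "\<bar>(1 - r) * H$i$j\<bar> \<le> 2 * (18 * a\<^sup>2 * w) * a"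
      using Ha by (intro abs_mult_le[OF r]) auto
    moreover have "\<bar>Q$i$j - H$i$j\<bar> \<le> w"
      using close by blast
    ultimately show ?thesis
      using abs_triangle_ineq[of "Q$i$j - H$i$j" "(1 - r) * H$i$j"]
      by (simp add: split power2_eq_square power3_eq_cube algebra_simps)
  qed
  then have "qnorm (Q - \<rho> *\<^sub>R P) \<le> 2 * (w + 36 * a^3 * w)"
    using w0 a by (intro qnorm_le) auto
  also have "\<dots> \<le> 74 * a^3 * w"
    using mult_right_mono[OF one_le_power[OF a, of 3] w0] by (simp add: mult.commute)
  finally show "qnorm (Q - \<rho> *\<^sub>R P) \<le> 74 * a^3 * w"
    by (simp add: \<rho>_def)
qed

lemma exists_approximation_from_five_small_values:
  fixes Q :: "real^3^3"
  assumes symQ: "symmetric_form Q" and detQ: "qdet Q = 1" and Qb: "\<forall>i j. \<bar>Q$i$j\<bar> \<le> q"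
    and q: "0 \<le> q"
    and gp: "general_position {z1, z2, z3, z4, z5}" and dist: "distinct [z1, z2, z3, z4, z5]"
    and pts: "\<And>z. z \<in> {z1, z2, z3, z4, z5} \<Longrightarrow> integral_vec z \<and> supn z \<le> Z \<and> \<bar>qf Q z\<bar> \<le> \<epsilon>"
    and \<epsilon>: "720 * (q + 1)\<^sup>2 * Z^4 * \<epsilon> \<le> 1"
  shows "\<exists>P. integral_form P \<and> P \<noteq> 0 \<and> qdet P \<noteq> 0 \<and> qnorm P \<le> 576 * Z^10 \<and>
    qnorm (Q - root 3 (inverse (qdet P)) *\<^sub>R P) \<le> 1480 * (q + 1)^3 * Z^4 * \<epsilon>"
proof -
  have int: "integral_vec z1" "integral_vec z2" "integral_vec z3" "integral_vec z4" "integral_vec z5"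
    and bound: "supn z1 \<le> Z" "supn z2 \<le> Z" "supn z3 \<le> Z" "supn z4 \<le> Z" "supn z5 \<le> Z"
    and small: "\<bar>qf Q z1\<bar> \<le> \<epsilon>" "\<bar>qf Q z2\<bar> \<le> \<epsilon>" "\<bar>qf Q z3\<bar> \<le> \<epsilon>" "\<bar>qf Q z4\<bar> \<le> \<epsilon>"
      "\<bar>qf Q z5\<bar> \<le> \<epsilon>"
    by (simp_all add: pts)
  define w where "w = 20 * Z^4 * \<epsilon>"
  obtain W where symW: "symmetric_form W" and W: "qf W z1 = qf Q z1" "qf W z2 = qf Q z2"
    "qf W z3 = qf Q z3" "qf W z4 = qf Q z4" "qf W z5 = qf Q z5" and Wb: "\<forall>i j. \<bar>W$i$j\<bar> \<le> w"
    using exists_small_interpolating_form[OF gp dist int bound small] by (auto simp: w_def)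
  define P where "P = conic5 z1 z2 z3 z4 z5"
  define \<kappa> where "\<kappa> = qf (Q - W) (z1 + z2) / qf P (z1 + z2)"
  have QW: "Q - W = \<kappa> *\<^sub>R P"
    unfolding \<kappa>_def P_def
    by (rule proportional_if_vanish_on_five[OF _ symmetric_form_conic5 gp dist _ _ _ _ _
          qf_conic5_vanishes qf_conic5_ne_0[OF gp dist]])
      (simp_all add: symmetric_form_diff symQ symW qf_matrix_diff W)
  have "0 \<le> Z^4 * \<epsilon>"
    using small(1) by simp
  moreover have "1 \<le> (q + 1)\<^sup>2"
    using q by simp
  ultimately have "Z^4 * \<epsilon> \<le> 36 * (q + 1)\<^sup>2 * (Z^4 * \<epsilon>)"
    using mult_right_mono[of 1 "36 * (q + 1)\<^sup>2" "Z^4 * \<epsilon>"] by simp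
  then have w: "w \<le> 1" "18 * (q + 1)\<^sup>2 * w \<le> 1 / 2"
    using \<epsilon> by (simp_all add: w_def algebra_simps)
  have "\<bar>(Q - W)$i$j\<bar> \<le> q + 1" for i j
  proof -
    have "\<bar>Q$i$j\<bar> \<le> q" "\<bar>W$i$j\<bar> \<le> w"
      using Qb Wb by auto
    then show ?thesis
      using abs_triangle_ineq4[of "Q$i$j" "W$i$j"] w(1) by simp
  qed
  moreover have "\<forall>i j. \<bar>Q$i$j\<bar> \<le> q + 1" "\<forall>i j. \<bar>Q$i$j - (Q - W)$i$j\<bar> \<le> w"
    using Qb Wb by (auto simp: add_increasing2)
  ultimately have "qdet P \<noteq> 0" "qnorm (Q - root 3 (inverse (qdet P)) *\<^sub>R P) \<le> 74 * (q + 1)^3 * w"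
    using normalized_multiple_approximates[OF detQ _ _ _ _ w(2) QW] q by auto
  moreover have "qnorm P \<le> 576 * Z^10"
    using qnorm_le[of P "288 * Z^10"] abs_conic5_entry_le[OF bound] by (simp add: P_def)
  moreover have "integral_form P"
    unfolding P_def by (rule integral_form_conic5[OF int])
  moreover have "P \<noteq> 0"
    using \<open>qdet P \<noteq> 0\<close> by (auto simp: qdet_def det_3)
  ultimately show ?thesis
    by (auto simp: w_def)
qed

lemma obtain_five_distinct:
  assumes "5 \<le> card D"
  obtains a1 a2 a3 a4 a5 where "{a1, a2, a3, a4, a5} \<subseteq> D" "distinct [a1, a2, a3, a4, a5]"
proof -
  obtain T where "T \<subseteq> D" "card T = 5"
    using obtain_subset_with_card_n[OF assms] by blast
  moreover have "\<exists>a1 a2 a3 a4 a5. T = {a1, a2, a3, a4, a5} \<and> distinct [a1, a2, a3, a4, a5]"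
    using \<open>card T = 5\<close> by (simp add: card_Suc_eq numeral_eq_Suc; blast?)
  ultimately show ?thesis
    using that by auto
qed

lemma card_le_4_if_pairwise_independent:
  fixes Q :: "real^3^3" and D :: "(real^3) set"
  assumes symQ: "symmetric_form Q" and detQ: "qdet Q = 1" and Qb: "\<forall>i j. \<bar>Q$i$j\<bar> \<le> q"
    and q: "1 \<le> q" and M: "0 \<le> M" and c: "0 \<le> c"
    and dioph: "\<And>P. integral_form P \<Longrightarrow> P \<noteq> 0 \<Longrightarrow> qdet P \<noteq> 0 \<Longrightarrow>
      c * qnorm P powr (- M) < qnorm (Q - root 3 (inverse (qdet P)) *\<^sub>R P)"
    and Z: "1 \<le> Z"
    and D: "\<And>z. z \<in> D \<Longrightarrow> integral_vec z \<and> supn z \<le> Z \<and> \<bar>qf Q z\<bar> \<le> \<epsilon>"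
    and indep: "pairwise (\<lambda>a b. a \<times> b \<noteq> 0) D"
    and \<epsilon>1: "(1296 * q * Z^8)\<^sup>2 * \<epsilon> < 1"
    and \<epsilon>2: "1480 * (q + 1)^3 * Z^4 * \<epsilon> \<le> c * (576 * Z^10) powr (- M)"
  shows "card D \<le> 4"
proof (rule ccontr)
  assume "\<not> card D \<le> 4"
  then have "5 \<le> card D"
    by simp
  then obtain z1 z2 z3 z4 z5 where sub: "{z1, z2, z3, z4, z5} \<subseteq> D"
    and dist: "distinct [z1, z2, z3, z4, z5]"
    by (rule obtain_five_distinct)
  have pts: "integral_vec z \<and> supn z \<le> Z \<and> \<bar>qf Q z\<bar> \<le> \<epsilon>" if "z \<in> {z1, z2, z3, z4, z5}" for z
    using sub that D by blast
  have "det Q = -1"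
    using detQ by (simp add: qdet_def)
  then have "general_position {z1, z2, z3, z4, z5}"
    by (rule general_position_if_pairwise_independent[OF symQ _ Qb Z pts pairwise_subset[OF indep sub] \<epsilon>1])
  moreover have "720 * (q + 1)\<^sup>2 * Z^4 * \<epsilon> \<le> 1"
  proof -
    have "0 \<le> \<epsilon>"
      using pts[of z1] by auto
    have "(q + 1)\<^sup>2 * Z^4 \<le> (2 * q)\<^sup>2 * Z^16"
      using q Z by (intro mult_mono power_mono power_increasing) auto
    from mult_right_mono[OF this \<open>0 \<le> \<epsilon>\<close>]
    have "(q + 1)\<^sup>2 * Z^4 * \<epsilon> \<le> 4 * (q\<^sup>2 * Z^16 * \<epsilon>)"
      by (simp add: power_mult_distrib mult.assoc)
    moreover have "0 \<le> q\<^sup>2 * Z^16 * \<epsilon>" "(1296 * q * Z^8)\<^sup>2 * \<epsilon> = 1679616 * (q\<^sup>2 * Z^16 * \<epsilon>)"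
      using \<open>0 \<le> \<epsilon>\<close> by simp algebra
    ultimately show ?thesis
      using \<epsilon>1 by linarith
  qed
  ultimately obtain P where P: "integral_form P" "P \<noteq> 0" "qdet P \<noteq> 0" "qnorm P \<le> 576 * Z^10"
    and approx: "qnorm (Q - root 3 (inverse (qdet P)) *\<^sub>R P) \<le> 1480 * (q + 1)^3 * Z^4 * \<epsilon>"
    using exists_approximation_from_five_small_values[OF symQ detQ Qb _ _ dist pts] q by auto
  have "c * (576 * Z^10) powr (- M) \<le> c * qnorm P powr (- M)"
    using M c P(4) qnorm_pos[OF P(2)] by (intro mult_left_mono powr_mono2') auto
  also have "\<dots> < 1480 * (q + 1)^3 * Z^4 * \<epsilon>"
    using dioph[OF P(1-3)] approx by linarith
  finally show False
    using \<epsilon>2 by linarith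
qed

section \<open>Covering by lines\<close>

lemma mem_line_through_origin_iff_cross3_eq_0:
  "d \<noteq> 0 \<Longrightarrow> v \<in> line_through_origin d \<longleftrightarrow> d \<times> v = 0"
  by (auto simp: line_through_origin_def cross_eq_0 collinear_lemma)

lemma covered_by_lines_if_card_bounded:
  fixes S :: "(real^3) set"
  assumes S0: "0 \<notin> S"
    and bounded: "\<And>D. D \<subseteq> S \<Longrightarrow> finite D \<Longrightarrow> pairwise (\<lambda>a b. a \<times> b \<noteq> 0) D \<Longrightarrow> card D \<le> n"
  shows "\<exists>D. finite D \<and> card D \<le> n \<and> (\<forall>d\<in>D. d \<noteq> 0) \<and> S \<subseteq> (\<Union>d\<in>D. line_through_origin d)"
proof -
  define \<D> where "\<D> = {D. D \<subseteq> S \<and> finite D \<and> pairwise (\<lambda>a b. a \<times> b \<noteq> 0) D}"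
  have fin: "finite (card ` \<D>)"
    by (rule finite_subset[of _ "{..n}"]) (auto simp: \<D>_def bounded)
  have "Max (card ` \<D>) \<in> card ` \<D>"
    using fin by (rule Max_in) (auto simp: \<D>_def)
  then obtain D where D: "D \<in> \<D>" and max: "\<And>D'. D' \<in> \<D> \<Longrightarrow> card D' \<le> card D"
    using Max_ge[OF fin] by auto
  have D0: "d \<noteq> 0" if "d \<in> D" for d
    using D S0 that by (auto simp: \<D>_def)
  have "v \<in> (\<Union>d\<in>D. line_through_origin d)" if v: "v \<in> S" for v
  proof (rule ccontr)
    assume uncovered: "v \<notin> (\<Union>d\<in>D. line_through_origin d)"
    have "d \<times> v \<noteq> 0" "v \<times> d \<noteq> 0" if "d \<in> D" for d
      using uncovered that mem_line_through_origin_iff_cross3_eq_0[OF D0[OF that], of v]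
      by (auto simp: cross_skew[of v])
    then have "insert v D \<in> \<D>"
      using D v by (auto simp: \<D>_def pairwise_insert)
    moreover have "v \<notin> D"
      using \<open>\<And>d. d \<in> D \<Longrightarrow> d \<times> v \<noteq> 0\<close> cross_refl by blast
    ultimately show False
      using max[of "insert v D"] D by (simp add: \<D>_def)
  qed
  then show ?thesis
    using D D0 bounded by (intro exI[of _ D]) (auto simp: \<D>_def)
qed

lemma cross3_matrix_image_ne_0:
  fixes A :: "real^3^3"
  assumes "det A \<noteq> 0" "x \<times> y \<noteq> 0" shows "(A *v x) \<times> (A *v y) \<noteq> 0"
  using cross_matrix_mult[of A x y] assms by auto

section \<open>Back to the lattice\<close>

lemma realpow_mult_powr_le:
  fixes R :: real
  assumes "1 \<le> R" "real n + a \<le> b" shows "R^n * R powr a \<le> R powr b"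
proof -
  have "R^n * R powr a = R powr (real n + a)"
    using assms(1) by (simp add: powr_add powr_realpow)
  also have "\<dots> \<le> R powr b"
    using assms by (intro powr_mono) auto
  finally show ?thesis .
qed

text \<open>With \<open>Z = K R\<^sup>2\<close> the two bounds grow like \<open>R^32\<close> and \<open>R^(8 + 20 M)\<close>, which the decay
  \<open>R powr (- 50 * M)\<close> of the admissible values beats because \<open>M > 1\<close>.\<close>
lemma small_parameters_exist:
  fixes K q c M :: real
  assumes K: "1 \<le> K" and q: "1 \<le> q" and c: "0 < c" and M: "1 < M"
  shows "\<exists>\<eta>. 0 < \<eta> \<and> \<eta> < 1 \<and> (\<forall>R\<ge>1.
    (1296 * q * (K * R\<^sup>2)^8)\<^sup>2 * (\<eta> * R powr (- 50 * M)) < 1 \<and>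
    1480 * (q + 1)^3 * (K * R\<^sup>2)^4 * (\<eta> * R powr (- 50 * M)) \<le> c * (576 * (K * R\<^sup>2)^10) powr (- M))"
proof -
  define A where "A = (1296 * q * K^8)\<^sup>2"
  define B where "B = 1480 * (q + 1)^3 * K^4"
  define C where "C = c * (576 * K^10) powr (- M)"
  define \<eta> where "\<eta> = min (1 / 2) (min (1 / (2 * A)) (C / B))"
  have pos: "0 < A" "0 < B" "0 < C"
    using K q c by (simp_all add: A_def B_def C_def)
  have "\<eta> \<le> 1 / (2 * A)" "\<eta> \<le> C / B"
    by (simp_all add: \<eta>_def)
  then have "A * \<eta> \<le> 1 / 2" "B * \<eta> \<le> C"
    using pos by (simp_all add: le_divide_eq algebra_simps)
  with pos have \<eta>: "0 < \<eta>" "\<eta> < 1" "A * \<eta> \<le> 1 / 2" "B * \<eta> \<le> C"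
    by (simp_all add: \<eta>_def)
  have "(1296 * q * (K * R\<^sup>2)^8)\<^sup>2 * (\<eta> * R powr (- 50 * M)) < 1"
    "1480 * (q + 1)^3 * (K * R\<^sup>2)^4 * (\<eta> * R powr (- 50 * M)) \<le> c * (576 * (K * R\<^sup>2)^10) powr (- M)"
    if R: "1 \<le> R" for R
  proof -
    have "(1296 * q * (K * R\<^sup>2)^8)\<^sup>2 * (\<eta> * R powr (- 50 * M)) = A * \<eta> * (R^32 * R powr (- 50 * M))"
      unfolding A_def by (simp add: power_mult_distrib flip: power_mult)
    also have "\<dots> \<le> A * \<eta> * R powr 0"
      using R M pos \<eta> by (intro mult_left_mono realpow_mult_powr_le) auto
    finally show "(1296 * q * (K * R\<^sup>2)^8)\<^sup>2 * (\<eta> * R powr (- 50 * M)) < 1"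
      using R \<eta>(3) by simp
    have "1480 * (q + 1)^3 * (K * R\<^sup>2)^4 * (\<eta> * R powr (- 50 * M))
        = B * \<eta> * (R^8 * R powr (- 50 * M))"
      unfolding B_def by (simp add: power_mult_distrib flip: power_mult)
    also have "\<dots> \<le> C * R powr (- 20 * M)"
      using R M pos \<eta> by (intro mult_mono realpow_mult_powr_le) auto
    also have "\<dots> = c * (576 * (K * R\<^sup>2)^10) powr (- M)"
    proof -
      have "576 * (K * R\<^sup>2)^10 = (576 * K^10) * R powr 20"
        using R by (simp add: powr_numeral) algebra
      moreover have "(576 * K^10 * R powr 20) powr (- M) = (576 * K^10) powr (- M) * (R powr 20) powr (- M)"
        by (rule powr_mult)
      moreover have "(R powr 20) powr (- M) = R powr (- 20 * M)"
        unfolding powr_powr by simp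
      ultimately show ?thesis
        by (simp add: C_def mult.assoc)
    qed
    finally show "1480 * (q + 1)^3 * (K * R\<^sup>2)^4 * (\<eta> * R powr (- 50 * M))
        \<le> c * (576 * (K * R\<^sup>2)^10) powr (- M)" .
  qed
  with \<eta> show ?thesis
    by blast
qed

lemma lattice_point_small_value:
  fixes g gi Q :: "real^3^3"
  assumes gi: "gi ** g = mat 1" and K: "\<And>v. supn (gi *v v) \<le> K * supn v" "0 \<le> K"
    and Qg: "\<forall>v. qf Q v = Q0 (g *v v)" and M: "0 \<le> M" and \<eta>: "0 \<le> \<eta>" and R: "0 < R"
    and v: "v \<in> lattice_of g \<inter> H_set \<eta> M" "R \<le> supn v" "supn v < R\<^sup>2"
  shows "integral_vec (gi *v v) \<and> supn (gi *v v) \<le> K * R\<^sup>2 \<and> \<bar>qf Q (gi *v v)\<bar> \<le> \<eta> * R powr (- 50 * M)"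
proof -
  obtain z where z: "v = g *v z" "integral_vec z"
    using v(1) by (auto simp: lattice_of_def integral_vec_def)
  then have "gi *v v = z"
    by (simp add: matrix_vector_mul_assoc gi)
  moreover have "supn (gi *v v) \<le> K * R\<^sup>2"
    using K v(3) by (meson less_imp_le mult_left_mono order_trans)
  moreover have "\<bar>Q0 v\<bar> \<le> \<eta> * R powr (- 50 * M)"
  proof -
    have "\<bar>Q0 v\<bar> \<le> \<eta> * supn v powr (- 50 * M)"
      using v(1) by (simp add: H_set_def)
    also have "\<dots> \<le> \<eta> * R powr (- 50 * M)"
      using M \<eta> R v(2) by (intro mult_left_mono powr_mono2') auto
    finally show ?thesis .
  qed
  ultimately show ?thesis
    using z Qg by simp
qed

lemma exists_left_inverse_with_supn_bound:
  fixes g :: "real^3^3"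
  assumes "det g \<noteq> 0"
  obtains gi K where "gi ** g = mat 1" "1 \<le> K" "\<And>v. supn (gi *v v) \<le> K * supn v"
proof -
  obtain gi where gi: "gi ** g = mat 1"
    using assms invertible_det_nz[of g] unfolding invertible_def by auto
  define K where "K = 1 + (\<Sum>i\<in>UNIV. \<Sum>j\<in>UNIV. \<bar>gi$i$j\<bar>)"
  have "supn (gi *v v) \<le> K * supn v" for v
    using supn_matrix_vector_le[of gi v] supn_nonneg[of v] by (simp add: K_def distrib_right)
  moreover have "1 \<le> K"
    by (simp add: K_def sum_nonneg)
  ultimately show ?thesis
    using that gi by blast
qed

lemma lattice_points_covered_by_4_lines:
  fixes Q g gi :: "real^3^3"
  assumes symQ: "symmetric_form Q" and detQ: "qdet Q = 1" and Qb: "\<forall>i j. \<bar>Q$i$j\<bar> \<le> q"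
    and q: "1 \<le> q" and M: "0 \<le> M" and c: "0 \<le> c"
    and dioph: "\<And>P. integral_form P \<Longrightarrow> P \<noteq> 0 \<Longrightarrow> qdet P \<noteq> 0 \<Longrightarrow>
      c * qnorm P powr (- M) < qnorm (Q - root 3 (inverse (qdet P)) *\<^sub>R P)"
    and Qg: "\<forall>v. qf Q v = Q0 (g *v v)" and gi: "gi ** g = mat 1"
    and K: "\<And>v. supn (gi *v v) \<le> K * supn v" "1 \<le> K" and \<eta>: "0 \<le> \<eta>" and R: "1 \<le> R"
    and small: "(1296 * q * (K * R\<^sup>2)^8)\<^sup>2 * (\<eta> * R powr (- 50 * M)) < 1"
      "1480 * (q + 1)^3 * (K * R\<^sup>2)^4 * (\<eta> * R powr (- 50 * M)) \<le> c * (576 * (K * R\<^sup>2)^10) powr (- M)"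
  defines "S \<equiv> {v \<in> lattice_of g \<inter> H_set \<eta> M. R \<le> supn v \<and> supn v < R\<^sup>2}"
  shows "\<exists>D. finite D \<and> card D \<le> 4 \<and> (\<forall>d\<in>D. d \<noteq> 0) \<and> S \<subseteq> (\<Union>d\<in>D. line_through_origin d)"
proof (rule covered_by_lines_if_card_bounded)
  show "0 \<notin> S"
    using R by (simp add: S_def supn_def)
  fix D
  assume D: "D \<subseteq> S" "pairwise (\<lambda>a b. a \<times> b \<noteq> 0) D"
  have "det gi \<noteq> 0"
    using arg_cong[OF gi, of det] by (auto simp: det_mul)
  have "g ** gi = mat 1"
    using gi by (simp add: matrix_left_right_inverse)
  then have "inj ((*v) gi)"
    by (metis injI matrix_vector_mul_assoc matrix_vector_mul_lid)
  moreover have "card ((*v) gi ` D) \<le> 4"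
  proof (rule card_le_4_if_pairwise_independent[OF symQ detQ Qb q M c dioph _ _ _ small])
    have "1 \<le> R\<^sup>2"
      using R by simp
    then show "1 \<le> K * R\<^sup>2"
      using mult_mono[OF K(2) \<open>1 \<le> R\<^sup>2\<close>] K(2) by simp
    show "pairwise (\<lambda>a b. a \<times> b \<noteq> 0) ((*v) gi ` D)"
    proof (rule pairwiseI)
      fix x y
      assume "x \<in> (*v) gi ` D" "y \<in> (*v) gi ` D" "x \<noteq> y"
      then obtain a b where "a \<in> D" "b \<in> D" "a \<noteq> b" "x = gi *v a" "y = gi *v b"
        by blast
      then show "x \<times> y \<noteq> 0"
        using pairwiseD[OF D(2)] cross3_matrix_image_ne_0[OF \<open>det gi \<noteq> 0\<close>] by blast
    qed
    show "integral_vec z \<and> supn z \<le> K * R\<^sup>2 \<and> \<bar>qf Q z\<bar> \<le> \<eta> * R powr (- 50 * M)"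
      if z: "z \<in> (*v) gi ` D" for z
    proof -
      obtain v where "v \<in> D" "z = gi *v v"
        using z by blast
      with D(1) show ?thesis
        using lattice_point_small_value[OF gi K(1) _ Qg M \<eta>, of R v] K(2) R by (auto simp: S_def)
    qed
  qed
  ultimately show "card D \<le> 4"
    by (simp add: card_image inj_on_subset)
qed

theorem lemma2p6:
  fixes M :: real and Q g :: "real^3^3"
  assumes "M > 1"
    and "symmetric_form Q"
    and "indefinite Q"
    and "qdet Q = 1"
    and "diophantine_type Q M"
    and "det g = 1"
    and "\<forall>v. qf Q v = Q0 (g *v v)"
  shows "\<exists>\<eta>. 0 < \<eta> \<and> \<eta> < 1 \<and>
    (\<forall>R>10. \<exists>D. finite D \<and> card D \<le> 12 \<and> (\<forall>d\<in>D. d \<noteq> 0) \<and>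
       {v \<in> lattice_of g \<inter> H_set \<eta> M. R \<le> supn v \<and> supn v < R^2}
         \<subseteq> (\<Union>d\<in>D. line_through_origin d))"
proof -
  obtain c where c: "0 < c" and dioph: "\<And>P. integral_form P \<Longrightarrow> P \<noteq> 0 \<Longrightarrow> qdet P \<noteq> 0 \<Longrightarrow>
      c * qnorm P powr (- M) < qnorm (Q - root 3 (inverse (qdet P)) *\<^sub>R P)"
    using assms(5) unfolding diophantine_type_def by blast
  obtain gi K where gi: "gi ** g = mat 1" "1 \<le> K" "\<And>v. supn (gi *v v) \<le> K * supn v"
    using exists_left_inverse_with_supn_bound[of g] assms(6) by auto
  define q where "q = 1 + (\<Sum>i\<in>UNIV. \<Sum>j\<in>UNIV. \<bar>Q$i$j\<bar>)"
  have q: "\<forall>i j. \<bar>Q$i$j\<bar> \<le> q" "1 \<le> q"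
    using abs_entry_le_sum_abs[of Q] by (auto simp: q_def sum_nonneg intro: add_increasing)
  obtain \<eta> where \<eta>: "0 < \<eta>" "\<eta> < 1" and small: "\<And>R. 1 \<le> R \<Longrightarrow>
    (1296 * q * (K * R\<^sup>2)^8)\<^sup>2 * (\<eta> * R powr (- 50 * M)) < 1 \<and>
    1480 * (q + 1)^3 * (K * R\<^sup>2)^4 * (\<eta> * R powr (- 50 * M)) \<le> c * (576 * (K * R\<^sup>2)^10) powr (- M)"
    using small_parameters_exist[OF gi(2) q(2) c assms(1)] by blast
  show ?thesis
  proof (rule exI[of _ \<eta>], intro conjI allI impI)
    fix R :: real
    assume "10 < R"
    then have "1 \<le> R"
      by simp
    have "0 \<le> M" "0 \<le> c" "0 \<le> \<eta>"
      using assms(1) c \<eta> by simp_all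
    then obtain D where "finite D" "card D \<le> 4" "\<forall>d\<in>D. d \<noteq> 0"
      "{v \<in> lattice_of g \<inter> H_set \<eta> M. R \<le> supn v \<and> supn v < R^2} \<subseteq> (\<Union>d\<in>D. line_through_origin d)"
      using lattice_points_covered_by_4_lines[OF assms(2,4) q _ _ dioph assms(7) gi(1,3,2) _ \<open>1 \<le> R\<close>
          small[OF \<open>1 \<le> R\<close>, THEN conjunct1] small[OF \<open>1 \<le> R\<close>, THEN conjunct2]]
      by blast
    then show "\<exists>D. finite D \<and> card D \<le> 12 \<and> (\<forall>d\<in>D. d \<noteq> 0) \<and>
       {v \<in> lattice_of g \<inter> H_set \<eta> M. R \<le> supn v \<and> supn v < R^2} \<subseteq> (\<Union>d\<in>D. line_through_origin d)"
      by (intro exI[of _ D]) simp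
  qed (use \<eta> in simp_all)
qed

end
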